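(* Let $H$ be a complex Hilbert space, let $A$ be a closed symmetric operator in $H$ (its domain $D(A)$ need not be dense) which is invertible, i.e. injective, and let $z\in\mathbb{C}\setminus\mathbb{R}$ be fixed. Let $T$ be a non-expanding linear operator ($\|T\psi\|_H\le\|\psi\|_H$) with $D(T)\subseteq\mathcal{N}_z(A)$, $R(T)\subseteq\mathcal{N}_{\overline{z}}(A)$, which is $z$-admissible with respect to $A$. Let $B$ be the operator defined by $$D(B)=D(A)\dotplus (T-E_H)D(T),\qquad B(f+T\psi-\psi)=Af+zT\psi-\overline{z}\psi,\quad f\in D(A),\ \psi\in D(T).$$ Then the following two conditions are equivalent: (i) the operator $B$ is invertible (injective); (ii) the operator $\frac{z}{\overline{z}}T$ is $\frac{1}{z}$-admissible with respect to the operator $A^{-1}$.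
   Context: $E_H$ is the identity operator on $H$. For a closed symmetric operator $S$ in $H$ and $\lambda\in\mathbb{C}\setminus\mathbb{R}$, set $\mathcal{M}_\lambda(S)=(S-\lambda E_H)D(S)$ and $\mathcal{N}_\lambda(S)=H\ominus\mathcal{M}_\lambda(S)$ (the defect subspace). Note that $A^{-1}$ (with domain $R(A)$) is a closed symmetric operator and $\mathcal{N}_\lambda(A)=\mathcal{N}_{1/\lambda}(A^{-1})$, so $\frac{z}{\overline z}T$ acts from $\mathcal{N}_{1/z}(A^{-1})$ to $\mathcal{N}_{1/\overline{z}}(A^{-1})$. The forbidden operator $X_\lambda(S)$ is the (well-defined) operator with domain $D(X_\lambda(S))=P^H_{\mathcal{N}_\lambda(S)}\big(H\ominus\overline{D(S)}\big)$ given by $X_\lambda(S)P^H_{\mathcal{N}_\lambda(S)}g=P^H_{\mathcal{N}_{\overline{\lambda}}(S)}g$ for $g\in H\ominus\overline{D(S)}$, where $P^H_{M}$ denotes the orthogonal projection onto a subspace $M$. A linear operator $C$ with $D(C)\subseteq\mathcal{N}_\lambda(S)$, $R(C)\subseteq\mathcal{N}_{\overline\lambda}(S)$ is called $\lambda$-admissible with respect to $S$ if there is no nonzero $\psi\in D(C)\cap D(X_\lambda(S))$ with $C\psi=X_\lambda(S)\psi$ (equivalently, $C-X_\lambda(S)$ is injective). *)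

theory Defs
  imports "HOL-Analysis.Analysis"
begin

text \<open>HOL-Analysis has no complex vector spaces / complex inner products, so we
introduce a type class of complex Hilbert spaces: a real Banach space carrying a
compatible complex scalar multiplication and a complex inner product (linear in
the first argument, conjugate symmetric) inducing the norm.\<close>

class chilbert = banach +
  fixes cscale :: "complex \<Rightarrow> 'a \<Rightarrow> 'a" (infixr "*\<^sub>C" 75)
    and cinner :: "'a \<Rightarrow> 'a \<Rightarrow> complex"
  assumes cscale_of_real: "cscale (complex_of_real r) x = scaleR r x"
    and cscale_add_left: "cscale (a + b) x = cscale a x + cscale b x"
    and cscale_add_right: "cscale a (x + y) = cscale a x + cscale a y"
    and cscale_mult: "cscale (a * b) x = cscale a (cscale b x)"
    and cinner_commute: "cinner x y = cnj (cinner y x)"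
    and cinner_add_left: "cinner (x + y) z = cinner x z + cinner y z"
    and cinner_scale_left: "cinner (cscale a x) y = a * cinner x y"
    and cinner_norm: "cinner x x = complex_of_real ((norm x)\<^sup>2)"

definition csubspace :: "'h::chilbert set \<Rightarrow> bool" where
  "csubspace S \<longleftrightarrow> 0 \<in> S \<and> (\<forall>x\<in>S. \<forall>y\<in>S. x + y \<in> S) \<and> (\<forall>a. \<forall>x\<in>S. a *\<^sub>C x \<in> S)"

definition orth_compl :: "'h::chilbert set \<Rightarrow> 'h set" where
  "orth_compl S = {y. \<forall>x\<in>S. cinner x y = 0}"

definition proj :: "'h::chilbert set \<Rightarrow> 'h \<Rightarrow> 'h" where
  "proj M g = (THE p. p \<in> M \<and> (\<forall>m\<in>M. cinner (g - p) m = 0))"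

definition lin_op :: "'h::chilbert set \<Rightarrow> ('h \<Rightarrow> 'h) \<Rightarrow> bool" where
  "lin_op D S \<longleftrightarrow> csubspace D \<and> (\<forall>x\<in>D. \<forall>y\<in>D. S (x + y) = S x + S y)
                 \<and> (\<forall>a. \<forall>x\<in>D. S (a *\<^sub>C x) = a *\<^sub>C S x)"

definition closed_op :: "'h::chilbert set \<Rightarrow> ('h \<Rightarrow> 'h) \<Rightarrow> bool" where
  "closed_op D S \<longleftrightarrow> closed {(x, S x) | x. x \<in> D}"

definition symmetric_op :: "'h::chilbert set \<Rightarrow> ('h \<Rightarrow> 'h) \<Rightarrow> bool" where
  "symmetric_op D S \<longleftrightarrow> lin_op D S \<and> (\<forall>x\<in>D. \<forall>y\<in>D. cinner (S x) y = cinner x (S y))"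

definition closed_symmetric :: "'h::chilbert set \<Rightarrow> ('h \<Rightarrow> 'h) \<Rightarrow> bool" where
  "closed_symmetric D S \<longleftrightarrow> symmetric_op D S \<and> closed_op D S"

text \<open>Inverse operator, with domain the range \<open>S ` D\<close>.\<close>
definition inv_op :: "'h::chilbert set \<Rightarrow> ('h \<Rightarrow> 'h) \<Rightarrow> 'h \<Rightarrow> 'h" where
  "inv_op D S y = (THE x. x \<in> D \<and> S x = y)"

definition M_sp :: "complex \<Rightarrow> 'h::chilbert set \<Rightarrow> ('h \<Rightarrow> 'h) \<Rightarrow> 'h set" where
  "M_sp l D S = (\<lambda>x. S x - l *\<^sub>C x) ` D"

definition N_sp :: "complex \<Rightarrow> 'h::chilbert set \<Rightarrow> ('h \<Rightarrow> 'h) \<Rightarrow> 'h set" where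
  "N_sp l D S = orth_compl (M_sp l D S)"

definition forbidden_dom :: "complex \<Rightarrow> 'h::chilbert set \<Rightarrow> ('h \<Rightarrow> 'h) \<Rightarrow> 'h set" where
  "forbidden_dom l D S = proj (N_sp l D S) ` orth_compl (closure D)"

definition forbidden_op :: "complex \<Rightarrow> 'h::chilbert set \<Rightarrow> ('h \<Rightarrow> 'h) \<Rightarrow> 'h \<Rightarrow> 'h" where
  "forbidden_op l D S \<psi> =
     (SOME y. \<exists>g \<in> orth_compl (closure D).
                 \<psi> = proj (N_sp l D S) g \<and> y = proj (N_sp (cnj l) D S) g)"

definition admissible ::
  "complex \<Rightarrow> 'h::chilbert set \<Rightarrow> ('h \<Rightarrow> 'h) \<Rightarrow> 'h set \<Rightarrow> ('h \<Rightarrow> 'h) \<Rightarrow> bool" where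
  "admissible l D S DC C \<longleftrightarrow>
     lin_op DC C \<and> DC \<subseteq> N_sp l D S \<and> C ` DC \<subseteq> N_sp (cnj l) D S \<and>
     \<not> (\<exists>\<psi>. \<psi> \<noteq> 0 \<and> \<psi> \<in> DC \<and> \<psi> \<in> forbidden_dom l D S \<and> C \<psi> = forbidden_op l D S \<psi>)"

definition ext_dom :: "'h::chilbert set \<Rightarrow> 'h set \<Rightarrow> ('h \<Rightarrow> 'h) \<Rightarrow> 'h set" where
  "ext_dom DA DT T = {f + T \<psi> - \<psi> | f \<psi>. f \<in> DA \<and> \<psi> \<in> DT}"

definition ext_op :: "complex \<Rightarrow> 'h::chilbert set \<Rightarrow> ('h \<Rightarrow> 'h) \<Rightarrow> 'h set \<Rightarrow> ('h \<Rightarrow> 'h) \<Rightarrow> 'h \<Rightarrow> 'h" where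
  "ext_op z DA A DT T x =
     (SOME y. \<exists>f\<in>DA. \<exists>\<psi>\<in>DT. x = f + T \<psi> - \<psi> \<and> y = A f + z *\<^sub>C T \<psi> - cnj z *\<^sub>C \<psi>)"

end

theory Submission
  imports Defs
begin

text \<open>Let \<open>S\<close> be closed symmetric, \<open>\<lambda>\<close> non-real, and \<open>P\<^sub>\<mu>\<close> the orthogonal projection onto \<open>N\<^sub>\<mu>(S)\<close>.
  The graph of the forbidden operator \<open>X\<^sub>\<lambda>(S)\<close> consists exactly of the pairs
  \<open>(\<phi>, \<eta>) \<in> N\<^sub>\<lambda> \<times> N\<^bsub>cnj \<lambda>\<^esub>\<close> with \<open>\<phi> - \<eta> \<in> D(S)\<close>: if \<open>g \<perp> D(S)\<close> and
  \<open>g - P\<^bsub>cnj \<lambda>\<^esub> g = (S - cnj \<lambda>) f\<close>, then \<open>f - (P\<^sub>\<lambda> g - P\<^bsub>cnj \<lambda>\<^esub> g) / (\<lambda> - cnj \<lambda>)\<close> lies in \<open>N\<^sub>\<lambda>\<close>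
  and is orthogonal to it; conversely such a pair comes from \<open>g = (S - cnj \<lambda>) f + \<eta>\<close> with
  \<open>f = (\<phi> - \<eta>) / (\<lambda> - cnj \<lambda>)\<close>. Hence \<open>C\<close> is \<open>\<lambda>\<close>-admissible iff the sum \<open>D(S) + (C - E\<^sub>H) D(C)\<close>
  is direct.

  For \<open>A\<close> and \<open>T\<close> this makes \<open>B\<close> well defined. Since
  \<open>B (f + T \<psi> - \<psi>) = A f - cnj z (\<psi> - (z / cnj z) T \<psi>)\<close>, \<open>B\<close> is injective iff the sum
  \<open>R(A) + ((z / cnj z) T - E\<^sub>H) D(T)\<close> is direct. As \<open>R(A) = D(A\<^sup>-\<^sup>1)\<close> and
  \<open>N\<^bsub>1/\<lambda>\<^esub>(A\<^sup>-\<^sup>1) = N\<^sub>\<lambda>(A)\<close>, the same criterion for \<open>A\<^sup>-\<^sup>1\<close> identifies this with the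
  \<open>1/z\<close>-admissibility of \<open>(z / cnj z) T\<close>.\<close>

section \<open>Complex inner product spaces\<close>

lemma cscale_zero_right [simp]: "a *\<^sub>C (0::'a::chilbert) = 0"
  using cscale_add_right[of a "0::'a" 0] by simp

lemma cscale_zero_left [simp]: "0 *\<^sub>C (x::'a::chilbert) = 0"
  using cscale_of_real[of 0 x] by simp

lemma cscale_one [simp]: "1 *\<^sub>C (x::'a::chilbert) = x"
  using cscale_of_real[of 1 x] by simp

lemma cscale_cscale [simp]: "a *\<^sub>C b *\<^sub>C x = (a * b) *\<^sub>C (x::'a::chilbert)"
  by (simp add: cscale_mult)

lemma cscale_minus_right: "a *\<^sub>C (- x) = - (a *\<^sub>C (x::'a::chilbert))"
  using cscale_add_right[of a x "-x"] by (simp add: eq_neg_iff_add_eq_0 add.commute)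

lemma cscale_diff_right: "a *\<^sub>C (x - y) = a *\<^sub>C x - a *\<^sub>C (y::'a::chilbert)"
  using cscale_add_right[of a x "-y"] by (simp add: cscale_minus_right)

lemma cscale_minus_left: "(- a) *\<^sub>C x = - (a *\<^sub>C (x::'a::chilbert))"
  using cscale_add_left[of "-a" a x] by (simp add: eq_neg_iff_add_eq_0 add.commute)

lemma cscale_diff_left: "(a - b) *\<^sub>C x = a *\<^sub>C x - b *\<^sub>C (x::'a::chilbert)"
  using cscale_add_left[of a "-b" x] by (simp add: cscale_minus_left)

lemma scaleR_eq_cscale: "r *\<^sub>R x = complex_of_real r *\<^sub>C (x::'a::chilbert)"
  by (simp add: cscale_of_real)

lemma cscale_eq_0_iff [simp]: "a *\<^sub>C x = 0 \<longleftrightarrow> a = 0 \<or> (x::'a::chilbert) = 0"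
proof
  assume ax: "a *\<^sub>C x = 0"
  show "a = 0 \<or> x = 0"
  proof (cases "a = 0")
    case False
    then have "x = (inverse a * a) *\<^sub>C x" by simp
    also have "\<dots> = 0" using ax by (simp flip: cscale_cscale)
    finally show ?thesis by simp
  qed simp
qed auto

lemma cinner_add_right: "cinner x (y + z) = cinner x y + cinner x (z::'a::chilbert)"
  by (metis cinner_add_left cinner_commute complex_cnj_add)

lemma cinner_scale_right: "cinner x (a *\<^sub>C y) = cnj a * cinner x (y::'a::chilbert)"
  by (metis cinner_commute cinner_scale_left complex_cnj_mult)

lemma cinner_zero_left [simp]: "cinner 0 (y::'a::chilbert) = 0"
  using cinner_add_left[of 0 0 y] by simp

lemma cinner_zero_right [simp]: "cinner x (0::'a::chilbert) = 0"
  using cinner_add_right[of x 0 0] by simp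

lemma cinner_minus_left: "cinner (- x) y = - cinner x (y::'a::chilbert)"
  using cinner_add_left[of x "-x" y] by (simp add: eq_neg_iff_add_eq_0 add.commute)

lemma cinner_minus_right: "cinner x (- y) = - cinner x (y::'a::chilbert)"
  using cinner_add_right[of x y "-y"] by (simp add: eq_neg_iff_add_eq_0 add.commute)

lemma cinner_diff_left: "cinner (x - y) z = cinner x z - cinner y (z::'a::chilbert)"
  using cinner_add_left[of x "-y" z] by (simp add: cinner_minus_left)

lemma cinner_diff_right: "cinner x (y - z) = cinner x y - cinner x (z::'a::chilbert)"
  using cinner_add_right[of x y "-z"] by (simp add: cinner_minus_right)

lemmas cinner_simps = cinner_add_left cinner_add_right cinner_diff_left cinner_diff_right
  cinner_minus_left cinner_minus_right cinner_scale_left cinner_scale_right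

lemma cinner_eq_zero_iff [simp]: "cinner x x = 0 \<longleftrightarrow> (x::'a::chilbert) = 0"
  by (simp add: cinner_norm)

lemma cinner_eq_zero_commute: "cinner x y = 0 \<longleftrightarrow> cinner y (x::'a::chilbert) = 0"
  by (metis cinner_commute complex_cnj_zero_iff)

lemma norm_cscale: "norm (a *\<^sub>C x) = cmod a * norm (x::'a::chilbert)"
proof -
  have "cinner (a *\<^sub>C x) (a *\<^sub>C x) = (a * cnj a) * cinner x x"
    by (simp add: cinner_scale_left cinner_scale_right mult.assoc)
  then have "complex_of_real ((norm (a *\<^sub>C x))\<^sup>2) =
      complex_of_real ((cmod a)\<^sup>2) * complex_of_real ((norm x)\<^sup>2)"
    by (simp only: cinner_norm complex_norm_square)
  then have "(norm (a *\<^sub>C x))\<^sup>2 = (cmod a * norm x)\<^sup>2"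
    by (metis of_real_eq_iff of_real_mult power_mult_distrib)
  then show ?thesis by simp
qed

lemma power2_norm_add:
  "(norm (x + y))\<^sup>2 = (norm x)\<^sup>2 + (norm y)\<^sup>2 + 2 * Re (cinner x (y::'a::chilbert))"
proof -
  have "cinner (x + y) (x + y) = cinner x x + cinner y y + (cinner x y + cnj (cinner x y))"
    by (simp add: cinner_simps cinner_commute[of y x])
  then have "Re (cinner (x + y) (x + y)) = Re (cinner x x) + Re (cinner y y) + 2 * Re (cinner x y)"
    by (simp add: complex_add_cnj)
  then show ?thesis by (simp add: cinner_norm del: of_real_power)
qed

lemma cmod_cinner_le: "cmod (cinner x y) \<le> norm x * norm (y::'a::chilbert)"
proof (cases "y = 0")
  case False
  define n where "n = (norm y)\<^sup>2"
  have n: "n > 0" using False by (simp add: n_def)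
  define c where "c = cinner x y"
  define t where "t = c / complex_of_real n"
  \<comment> \<open>expand \<open>0 \<le> \<parallel>x - t y\<parallel>\<^sup>2\<close> for the optimal \<open>t\<close>\<close>
  have "0 \<le> (norm (x - t *\<^sub>C y))\<^sup>2" by simp
  also have "\<dots> = Re (cinner (x - t *\<^sub>C y) (x - t *\<^sub>C y))"
    by (simp add: cinner_norm del: of_real_power)
  also have "cinner (x - t *\<^sub>C y) (x - t *\<^sub>C y) = cinner x x - cnj t * c - t * cnj c + t * cnj t * cinner y y"
    by (simp add: cinner_simps c_def cinner_commute[of y x] algebra_simps)
  also have "cinner y y = complex_of_real n" by (simp add: cinner_norm n_def del: of_real_power)
  also have "cinner x x - cnj t * c - t * cnj c + t * cnj t * complex_of_real n =
      cinner x x - c * cnj c / complex_of_real n"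
    using n by (simp add: t_def field_simps)
  also have "\<dots> = complex_of_real ((norm x)\<^sup>2 - (cmod c)\<^sup>2 / n)"
    by (simp add: cinner_norm complex_norm_square del: of_real_power)
  finally have "0 \<le> (norm x)\<^sup>2 - (cmod c)\<^sup>2 / n" by simp
  then have "(cmod c)\<^sup>2 \<le> (norm x * norm y)\<^sup>2"
    using n by (simp add: field_simps n_def)
  then show ?thesis unfolding c_def by (simp add: power2_le_iff_abs_le)
qed simp

lemma bounded_linear_cinner_left: "bounded_linear (\<lambda>x. cinner x (y::'a::chilbert))"
  by (rule bounded_linear_intro[where K="norm y"])
    (simp_all add: cinner_add_left scaleR_eq_cscale cinner_scale_left scaleR_conv_of_real cmod_cinner_le)

lemma bounded_linear_cinner_right: "bounded_linear (\<lambda>y. cinner (x::'a::chilbert) y)"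
  by (rule bounded_linear_intro[where K="norm x"])
    (simp_all add: cinner_add_right scaleR_eq_cscale cinner_scale_right scaleR_conv_of_real
      cmod_cinner_le[of x, unfolded mult.commute[of "norm x"]])

lemma bounded_linear_cscale: "bounded_linear (\<lambda>x. a *\<^sub>C (x::'a::chilbert))"
  by (rule bounded_linear_intro[where K="cmod a"])
    (simp_all add: cscale_add_right scaleR_eq_cscale norm_cscale mult.commute)

lemma csubspace_zero: "csubspace S \<Longrightarrow> 0 \<in> S"
  by (simp add: csubspace_def)

lemma csubspace_add: "csubspace S \<Longrightarrow> x \<in> S \<Longrightarrow> y \<in> S \<Longrightarrow> x + y \<in> S"
  by (simp add: csubspace_def)

lemma csubspace_scale: "csubspace S \<Longrightarrow> x \<in> S \<Longrightarrow> a *\<^sub>C x \<in> S"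
  by (simp add: csubspace_def)

lemma csubspace_diff: "csubspace S \<Longrightarrow> x \<in> S \<Longrightarrow> y \<in> S \<Longrightarrow> x - y \<in> S"
  using csubspace_scale[of S y "-1"] csubspace_add[of S x "- y"]
  by (simp add: cscale_minus_left)

lemma csubspace_orth_compl: "csubspace (orth_compl S)"
  unfolding csubspace_def orth_compl_def by (auto simp: cinner_add_right cinner_scale_right)

lemma closed_orth_compl: "closed (orth_compl (S::'a::chilbert set))"
proof -
  have "orth_compl S = (\<Inter>x\<in>S. (\<lambda>y. cinner x y) -` {0})" by (auto simp: orth_compl_def)
  then show ?thesis
    by (simp add: closed_INT closed_vimage linear_continuous_on bounded_linear_cinner_right)
qed

lemma orth_compl_closure: "orth_compl (closure (S::'a::chilbert set)) = orth_compl S"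
proof
  show "orth_compl (closure S) \<subseteq> orth_compl S"
    using closure_subset by (auto simp: orth_compl_def)
  show "orth_compl S \<subseteq> orth_compl (closure S)"
  proof
    fix y assume "y \<in> orth_compl S"
    then have "S \<subseteq> (\<lambda>x. cinner x y) -` {0}" by (auto simp: orth_compl_def)
    moreover have "closed ((\<lambda>x. cinner x y) -` {0})"
      by (simp add: closed_vimage linear_continuous_on bounded_linear_cinner_left)
    ultimately have "closure S \<subseteq> (\<lambda>x. cinner x y) -` {0}" by (rule closure_minimal)
    then show "y \<in> orth_compl (closure S)" by (auto simp: orth_compl_def)
  qed
qed

section \<open>Orthogonal projection onto a closed subspace\<close>

lemma parallelogram_law:
  "(norm (a - b))\<^sup>2 = 2 * (norm a)\<^sup>2 + 2 * (norm b)\<^sup>2 - (norm (a + (b::'a::chilbert)))\<^sup>2"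
  using power2_norm_add[of a b] power2_norm_add[of a "-b"] by (simp add: cinner_minus_right)

lemma Cauchy_minimizing_sequence:
  fixes M :: "'a::chilbert set"
  assumes M: "csubspace M" and ms: "\<And>n. ms n \<in> M"
    and lower: "\<And>m. m \<in> M \<Longrightarrow> d \<le> (norm (g - m))\<^sup>2"
    and close: "\<And>n. (norm (g - ms n))\<^sup>2 < d + inverse (real (Suc n))"
  shows "Cauchy ms"
proof -
  \<comment> \<open>the midpoint of \<open>ms n\<close> and \<open>ms k\<close> lies in \<open>M\<close>, so the parallelogram law bounds their distance\<close>
  have bound: "(norm (ms k - ms n))\<^sup>2 \<le> 2 * inverse (real (Suc n)) + 2 * inverse (real (Suc k))"
    for n k
  proof -
    define a where "a = g - ms n"
    define b where "b = g - ms k"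
    have "(1/2::real) *\<^sub>R (ms n + ms k) \<in> M"
      using M ms unfolding csubspace_def scaleR_eq_cscale by blast
    then have "4 * d \<le> 4 * (norm (g - (1/2::real) *\<^sub>R (ms n + ms k)))\<^sup>2"
      using lower by simp
    also have "\<dots> = (norm (a + b))\<^sup>2"
    proof -
      have "a + b = 2 *\<^sub>R (g - (1/2::real) *\<^sub>R (ms n + ms k))"
        by (simp add: a_def b_def algebra_simps scaleR_2)
      then show ?thesis by (simp add: power_mult_distrib)
    qed
    finally have "4 * d \<le> (norm (a + b))\<^sup>2" .
    moreover have "a - b = ms k - ms n" by (simp add: a_def b_def)
    moreover have "(norm a)\<^sup>2 < d + inverse (real (Suc n))" "(norm b)\<^sup>2 < d + inverse (real (Suc k))"
      using close by (auto simp: a_def b_def)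
    ultimately show ?thesis using parallelogram_law[of a b] by simp
  qed
  show ?thesis
  proof (rule metric_CauchyI)
    fix e :: real assume e: "e > 0"
    obtain N where N: "4 / (e * e) < real N" using reals_Archimedean2 by blast
    have N': "4 / real (Suc N) < e * e"
      using N e by (simp add: field_simps) (smt (verit) mult_pos_pos)
    have "dist (ms m) (ms n) < e" if "m \<ge> N" "n \<ge> N" for m n
    proof -
      have "inverse (real (Suc m)) \<le> inverse (real (Suc N))"
        "inverse (real (Suc n)) \<le> inverse (real (Suc N))"
        using that by (simp_all add: field_simps)
      then have "(norm (ms m - ms n))\<^sup>2 \<le> 4 * inverse (real (Suc N))"
        using bound[of m n] by linarith
      also have "\<dots> < e\<^sup>2" using N' by (simp add: power2_eq_square divide_inverse)
      finally have "norm (ms m - ms n) < e" using e by (simp add: power_less_imp_less_base)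
      then show ?thesis by (simp add: dist_norm)
    qed
    then show "\<exists>M. \<forall>m\<ge>M. \<forall>n\<ge>M. dist (ms m) (ms n) < e" by blast
  qed
qed

lemma nearest_point_exists:
  fixes M :: "'a::chilbert set"
  assumes M: "csubspace M" and cl: "closed M"
  shows "\<exists>p\<in>M. \<forall>m\<in>M. (norm (g - p))\<^sup>2 \<le> (norm (g - m))\<^sup>2"
proof -
  define d where "d = (INF m\<in>M. (norm (g - m))\<^sup>2)"
  have bdd: "bdd_below ((\<lambda>m. (norm (g - m))\<^sup>2) ` M)" by (rule bdd_belowI[of _ 0]) auto
  have ne: "M \<noteq> {}" using csubspace_zero[OF M] by blast
  have lower: "d \<le> (norm (g - m))\<^sup>2" if "m \<in> M" for m
    unfolding d_def using cINF_lower[OF bdd that] .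
  have "\<exists>m\<in>M. (norm (g - m))\<^sup>2 < d + inverse (real (Suc n))" for n
    using cInf_less_iff[of "(\<lambda>m. (norm (g - m))\<^sup>2) ` M" "d + inverse (real (Suc n))"] ne bdd
    unfolding d_def[symmetric] by simp
  then obtain ms where ms: "\<And>n. ms n \<in> M" "\<And>n. (norm (g - ms n))\<^sup>2 < d + inverse (real (Suc n))"
    by metis
  have "Cauchy ms" using Cauchy_minimizing_sequence[OF M ms(1) lower ms(2)] .
  then obtain p where lim: "ms \<longlonglongrightarrow> p" using Cauchy_convergent_iff convergent_def by blast
  have "(norm (g - p))\<^sup>2 \<le> d + 0"
  proof (rule LIMSEQ_le)
    show "(\<lambda>n. (norm (g - ms n))\<^sup>2) \<longlonglongrightarrow> (norm (g - p))\<^sup>2" by (intro tendsto_intros lim)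
    show "(\<lambda>n. d + inverse (real (Suc n))) \<longlonglongrightarrow> d + 0"
      by (intro tendsto_intros LIMSEQ_inverse_real_of_nat)
  qed (use ms(2) less_imp_le in blast)
  then show ?thesis using closed_sequentially[OF cl ms(1) lim] lower by (metis add_0_right order_trans)
qed

lemma nearest_point_orthogonal:
  fixes M :: "'a::chilbert set"
  assumes M: "csubspace M" and p: "p \<in> M"
    and nearest: "\<And>m. m \<in> M \<Longrightarrow> (norm (g - p))\<^sup>2 \<le> (norm (g - m))\<^sup>2"
    and m: "m \<in> M"
  shows "cinner (g - p) m = 0"
proof (rule ccontr)
  assume c0: "cinner (g - p) m \<noteq> 0"
  define e where "e = g - p"
  define c where "c = cinner e m"
  define s where "s = 1 / ((norm m)\<^sup>2 + 1)"
  have s: "s > 0" by (simp add: s_def add_nonneg_pos)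
  have sm: "s * (norm m)\<^sup>2 < 1"
    using add_nonneg_pos[of "(norm m)\<^sup>2" 1] by (simp add: s_def divide_less_eq)
  define t where "t = complex_of_real s * c"
  \<comment> \<open>moving from \<open>p\<close> a little towards \<open>m\<close> would decrease the distance to \<open>g\<close>\<close>
  have "p + t *\<^sub>C m \<in> M" using M p m by (simp add: csubspace_def)
  then have "(norm e)\<^sup>2 \<le> (norm (e + - (t *\<^sub>C m)))\<^sup>2"
    using nearest by (simp add: e_def algebra_simps)
  also have "\<dots> = (norm e)\<^sup>2 + (norm (t *\<^sub>C m))\<^sup>2 + 2 * Re (cinner e (- (t *\<^sub>C m)))"
    using power2_norm_add[of e "- (t *\<^sub>C m)"] by simp
  also have "cinner e (- (t *\<^sub>C m)) = - complex_of_real (s * (cmod c)\<^sup>2)"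
    by (simp add: cinner_minus_right cinner_scale_right t_def c_def mult.commute
        complex_norm_square[symmetric] del: of_real_power)
  also have "norm (t *\<^sub>C m) = s * cmod c * norm m"
    using s by (simp add: norm_cscale t_def norm_mult)
  finally have "0 \<le> (s * (cmod c)\<^sup>2) * (s * (norm m)\<^sup>2 - 2)"
    by (simp add: algebra_simps power2_eq_square)
  moreover have "s * (cmod c)\<^sup>2 > 0" using s c0 by (simp add: c_def e_def)
  ultimately have "0 \<le> s * (norm m)\<^sup>2 - 2" by (simp add: zero_le_mult_iff)
  then show False using sm by simp
qed

lemma proj_unique:
  assumes M: "csubspace M" and p: "p \<in> M" and orth: "\<And>m. m \<in> M \<Longrightarrow> cinner (g - p) m = 0"
  shows "proj M g = p"
  unfolding proj_def
proof (rule the_equality)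
  show "p \<in> M \<and> (\<forall>m\<in>M. cinner (g - p) m = 0)" using p orth by blast
  fix q assume q: "q \<in> M \<and> (\<forall>m\<in>M. cinner (g - q) m = 0)"
  have pq: "p - q \<in> M" using csubspace_diff[OF M] p q by blast
  have "cinner (p - q) (p - q) = cinner (g - q) (p - q) - cinner (g - p) (p - q)"
    by (simp add: cinner_diff_left)
  also have "\<dots> = 0" using q orth pq by simp
  finally show "q = p" by simp
qed

lemma
  assumes "csubspace M" "closed M"
  shows proj_in: "proj M g \<in> M"
    and proj_orthogonal: "m \<in> M \<Longrightarrow> cinner (g - proj M g) m = 0"
proof -
  obtain p where p: "p \<in> M" and near: "\<And>m. m \<in> M \<Longrightarrow> (norm (g - p))\<^sup>2 \<le> (norm (g - m))\<^sup>2"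
    using nearest_point_exists[OF assms] by blast
  have orth: "\<And>m. m \<in> M \<Longrightarrow> cinner (g - p) m = 0"
    using nearest_point_orthogonal[OF assms(1) p near] .
  have "proj M g = p" using proj_unique[OF assms(1) p orth] .
  then show "proj M g \<in> M" "m \<in> M \<Longrightarrow> cinner (g - proj M g) m = 0"
    using p orth by auto
qed

lemma proj_diff:
  assumes "csubspace M" "closed M"
  shows "proj M (g - g') = proj M g - proj M g'"
proof (rule proj_unique[OF assms(1)])
  show "proj M g - proj M g' \<in> M" using proj_in[OF assms] csubspace_diff[OF assms(1)] by blast
  fix m assume "m \<in> M"
  have "g - g' - (proj M g - proj M g') = (g - proj M g) - (g' - proj M g')" by simp
  then show "cinner (g - g' - (proj M g - proj M g')) m = 0"
    using proj_orthogonal[OF assms \<open>m \<in> M\<close>] by (simp add: cinner_diff_left)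
qed

section \<open>Closed symmetric operators and their defect subspaces\<close>

lemma lin_op_csubspace: "lin_op D S \<Longrightarrow> csubspace D"
  by (simp add: lin_op_def)

lemma lin_op_add: "lin_op D S \<Longrightarrow> x \<in> D \<Longrightarrow> y \<in> D \<Longrightarrow> S (x + y) = S x + S y"
  by (simp add: lin_op_def)

lemma lin_op_scale: "lin_op D S \<Longrightarrow> x \<in> D \<Longrightarrow> S (a *\<^sub>C x) = a *\<^sub>C S x"
  by (simp add: lin_op_def)

lemma lin_op_zero: "lin_op D S \<Longrightarrow> S 0 = 0"
  using lin_op_scale[of D S 0 0] by (simp add: lin_op_def csubspace_def)

lemma lin_op_diff: "lin_op D S \<Longrightarrow> x \<in> D \<Longrightarrow> y \<in> D \<Longrightarrow> S (x - y) = S x - S y"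
  using lin_op_add[of D S x "- y"] lin_op_scale[of D S y "- 1"]
    csubspace_scale[OF lin_op_csubspace, of D S y "- 1"]
  by (simp add: cscale_minus_left)

lemma lin_op_cscale: "lin_op D T \<Longrightarrow> lin_op D (\<lambda>x. c *\<^sub>C T x)"
  by (simp add: lin_op_def cscale_add_right mult.commute)

lemma closed_symmetric_lin_op: "closed_symmetric D S \<Longrightarrow> lin_op D S"
  by (simp add: closed_symmetric_def symmetric_op_def)

lemma closed_symmetric_cinner:
  "closed_symmetric D S \<Longrightarrow> x \<in> D \<Longrightarrow> y \<in> D \<Longrightarrow> cinner (S x) y = cinner x (S y)"
  by (simp add: closed_symmetric_def symmetric_op_def)

lemma Im_cinner_shift:
  assumes cs: "closed_symmetric D S" and f: "f \<in> D"
  shows "Im (cinner (S f - l *\<^sub>C f) f) = - Im l * (norm f)\<^sup>2"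
proof -
  have "cnj (cinner (S f) f) = cinner (S f) f"
    using closed_symmetric_cinner[OF cs f f] cinner_commute[of f "S f"] by simp
  then have "Im (cinner (S f) f) = 0" using arg_cong[of _ _ Im] by (metis Reals_cnj_iff complex_is_Real_iff)
  then show ?thesis by (simp add: cinner_diff_left cinner_scale_left cinner_norm del: of_real_power)
qed

lemma closed_symmetric_shift_eq_zero:
  assumes cs: "closed_symmetric D S" and l: "Im l \<noteq> 0" and f: "f \<in> D"
    and orth: "cinner (S f - l *\<^sub>C f) f = 0"
  shows "f = 0"
  using Im_cinner_shift[OF cs f, of l] orth l by simp

lemma norm_shift_lower_bound:
  assumes cs: "closed_symmetric D S" and f: "f \<in> D"
  shows "\<bar>Im l\<bar> * norm f \<le> norm (S f - l *\<^sub>C f)"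
proof (cases "f = 0")
  case False
  have "\<bar>Im l\<bar> * (norm f)\<^sup>2 = \<bar>Im (cinner (S f - l *\<^sub>C f) f)\<bar>"
    using Im_cinner_shift[OF cs f, of l] by (simp add: abs_mult)
  also have "\<dots> \<le> cmod (cinner (S f - l *\<^sub>C f) f)" by (rule abs_Im_le_cmod)
  also have "\<dots> \<le> norm (S f - l *\<^sub>C f) * norm f" by (rule cmod_cinner_le)
  finally have "(\<bar>Im l\<bar> * norm f) * norm f \<le> norm (S f - l *\<^sub>C f) * norm f"
    by (simp add: power2_eq_square mult.assoc)
  then show ?thesis using False by simp
qed simp

lemma M_sp_I: "h \<in> D \<Longrightarrow> S h - l *\<^sub>C h \<in> M_sp l D S"
  by (simp add: M_sp_def)

lemma csubspace_M_sp:
  assumes L: "lin_op D S"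
  shows "csubspace (M_sp l D S)"
  unfolding csubspace_def
proof (intro conjI ballI allI)
  have D: "csubspace D" using L by (rule lin_op_csubspace)
  show "0 \<in> M_sp l D S"
    using M_sp_I[OF csubspace_zero[OF D], of S l] lin_op_zero[OF L] by simp
  fix x assume "x \<in> M_sp l D S"
  then obtain a where a: "a \<in> D" "x = S a - l *\<^sub>C a" by (auto simp: M_sp_def)
  {
    fix c
    have "c *\<^sub>C x = S (c *\<^sub>C a) - l *\<^sub>C (c *\<^sub>C a)"
      using lin_op_scale[OF L a(1)] a(2) by (simp add: cscale_diff_right mult.commute)
    then show "c *\<^sub>C x \<in> M_sp l D S" using M_sp_I[OF csubspace_scale[OF D a(1)]] by simp
  }
  fix y assume "y \<in> M_sp l D S"
  then obtain b where b: "b \<in> D" "y = S b - l *\<^sub>C b" by (auto simp: M_sp_def)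
  have "x + y = S (a + b) - l *\<^sub>C (a + b)"
    using lin_op_add[OF L a(1) b(1)] a(2) b(2) by (simp add: cscale_add_right)
  then show "x + y \<in> M_sp l D S" using M_sp_I[OF csubspace_add[OF D a(1) b(1)]] by simp
qed

text \<open>Closedness of \<open>M_\<lambda>\<close> comes from the lower bound \<open>\<bar>Im \<lambda>\<bar> \<parallel>f\<parallel> \<le> \<parallel>(S - \<lambda>) f\<parallel>\<close>:
  a Cauchy sequence in \<open>M_\<lambda>\<close> has Cauchy preimages, whose limit lies in \<open>D\<close> since \<open>S\<close> is closed.\<close>

lemma closed_M_sp:
  assumes cs: "closed_symmetric D S" and l: "Im l \<noteq> 0"
  shows "closed (M_sp l D S)"
  unfolding closed_sequential_limits
proof (intro allI impI)
  fix y q assume yq: "(\<forall>n. y n \<in> M_sp l D S) \<and> y \<longlonglongrightarrow> q"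
  have L: "lin_op D S" using cs by (rule closed_symmetric_lin_op)
  have D: "csubspace D" using L by (rule lin_op_csubspace)
  obtain f where f: "\<And>n. f n \<in> D" "\<And>n. y n = S (f n) - l *\<^sub>C f n"
    using yq unfolding M_sp_def image_iff by metis
  have il: "\<bar>Im l\<bar> > 0" using l by simp
  have "Cauchy y" using yq convergent_Cauchy convergent_def by blast
  have "Cauchy f"
  proof (rule metric_CauchyI)
    fix e :: real assume e: "e > 0"
    obtain N where N: "\<forall>m\<ge>N. \<forall>n\<ge>N. dist (y m) (y n) < e * \<bar>Im l\<bar>"
      using \<open>Cauchy y\<close> mult_pos_pos[OF e il] unfolding Cauchy_def by blast
    have "dist (f m) (f n) < e" if "m \<ge> N" "n \<ge> N" for m n
    proof -
      have "S (f m - f n) - l *\<^sub>C (f m - f n) = y m - y n"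
        using f lin_op_diff[OF L f(1)[of m] f(1)[of n]] by (simp add: cscale_diff_right)
      then have "\<bar>Im l\<bar> * norm (f m - f n) \<le> norm (y m - y n)"
        using norm_shift_lower_bound[OF cs csubspace_diff[OF D f(1)[of m] f(1)[of n]], of l] by simp
      also have "\<dots> < \<bar>Im l\<bar> * e" using N that by (simp add: dist_norm mult.commute)
      finally show ?thesis using il by (simp add: dist_norm)
    qed
    then show "\<exists>M. \<forall>m\<ge>M. \<forall>n\<ge>M. dist (f m) (f n) < e" by blast
  qed
  then obtain f0 where f0: "f \<longlonglongrightarrow> f0" using Cauchy_convergent_iff convergent_def by blast
  have "(\<lambda>n. y n + l *\<^sub>C f n) \<longlonglongrightarrow> q + l *\<^sub>C f0"
    by (intro tendsto_add yq[THEN conjunct2] bounded_linear.tendsto[OF bounded_linear_cscale] f0)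
  then have lim: "(\<lambda>n. (f n, S (f n))) \<longlonglongrightarrow> (f0, q + l *\<^sub>C f0)"
    using f0 f(2) by (simp add: tendsto_Pair)
  have graph: "closed {(x, S x) | x. x \<in> D}"
    using cs by (simp add: closed_symmetric_def closed_op_def)
  have "(f0, q + l *\<^sub>C f0) \<in> {(x, S x) | x. x \<in> D}"
    by (rule closed_sequentially[OF graph _ lim]) (use f(1) in blast)
  then have "f0 \<in> D" "q = S f0 - l *\<^sub>C f0" by (auto simp: algebra_simps)
  then show "q \<in> M_sp l D S" by (simp add: M_sp_I)
qed

lemma N_sp_iff: "n \<in> N_sp l D S \<longleftrightarrow> (\<forall>h\<in>D. cinner (S h - l *\<^sub>C h) n = 0)"
  by (simp add: N_sp_def orth_compl_def M_sp_def)

lemma N_sp_cinner_right: "\<phi> \<in> N_sp l D S \<Longrightarrow> h \<in> D \<Longrightarrow> cinner \<phi> (S h) = cnj l * cinner \<phi> h"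
  by (subst (asm) N_sp_iff, subst (asm) cinner_eq_zero_commute)
    (simp add: cinner_diff_right cinner_scale_right)

lemma csubspace_N_sp: "csubspace (N_sp l D S)"
  by (simp add: N_sp_def csubspace_orth_compl)

lemma closed_N_sp: "closed (N_sp l D S)"
  by (simp add: N_sp_def closed_orth_compl)

lemma M_sp_orth_N_sp: "m \<in> M_sp l D S \<Longrightarrow> n \<in> N_sp l D S \<Longrightarrow> cinner m n = 0"
  by (simp add: N_sp_def orth_compl_def)

lemma proj_N_sp_eqI: "p \<in> N_sp l D S \<Longrightarrow> g - p \<in> M_sp l D S \<Longrightarrow> proj (N_sp l D S) g = p"
  by (intro proj_unique[OF csubspace_N_sp]) (auto simp: M_sp_orth_N_sp)

lemma orth_N_sp_imp_M_sp:
  assumes cs: "closed_symmetric D S" and l: "Im l \<noteq> 0"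
    and y: "\<And>n. n \<in> N_sp l D S \<Longrightarrow> cinner y n = 0"
  shows "y \<in> M_sp l D S"
proof -
  have M: "csubspace (M_sp l D S)" "closed (M_sp l D S)"
    using csubspace_M_sp[OF closed_symmetric_lin_op[OF cs]] closed_M_sp[OF cs l] by auto
  define p where "p = proj (M_sp l D S) y"
  have p: "p \<in> M_sp l D S" using proj_in[OF M] by (simp add: p_def)
  have yp: "y - p \<in> N_sp l D S"
    using proj_orthogonal[OF M] cinner_eq_zero_commute unfolding N_sp_def orth_compl_def p_def by blast
  have "cinner (y - p) (y - p) = cinner y (y - p) - cinner p (y - p)"
    by (simp add: cinner_diff_left)
  also have "\<dots> = 0" using y[OF yp] M_sp_orth_N_sp[OF p yp] by simp
  finally show ?thesis using p by simp
qed

lemma dom_inter_N_sp_eq_zero: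
  assumes cs: "closed_symmetric D S" and l: "Im l \<noteq> 0" and "f \<in> D" "f \<in> N_sp l D S"
  shows "f = 0"
  using assms by (intro closed_symmetric_shift_eq_zero[OF cs l]) (auto simp: N_sp_iff)

section \<open>The forbidden operator\<close>

lemma Im_nonzero_imp_cnj_neq: "Im l \<noteq> 0 \<Longrightarrow> l - cnj l \<noteq> 0"
  by (simp add: complex_eq_iff)

lemma cinner_defect_correction:
  assumes cs: "closed_symmetric D S" and l: "Im l \<noteq> 0" and f: "f \<in> D" and h: "h \<in> D"
    and \<phi>: "\<phi> \<in> N_sp l D S" and \<eta>: "\<eta> \<in> N_sp (cnj l) D S"
  shows "cinner (f - (1 / (l - cnj l)) *\<^sub>C (\<phi> - \<eta>)) (S h - l *\<^sub>C h) =
    cinner (S f - cnj l *\<^sub>C f + \<eta>) h"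
proof -
  have c: "l - cnj l \<noteq> 0" using Im_nonzero_imp_cnj_neq[OF l] .
  have "cinner (f - (1 / (l - cnj l)) *\<^sub>C (\<phi> - \<eta>)) (S h - l *\<^sub>C h) =
      cinner f (S h) - cnj l * cinner f h - (1 / (l - cnj l)) *
        (cinner \<phi> (S h) - cinner \<eta> (S h) - cnj l * (cinner \<phi> h - cinner \<eta> h))"
    by (simp add: cinner_simps algebra_simps)
  also have "\<dots> = cinner f (S h) - cnj l * cinner f h + cinner \<eta> h"
    using N_sp_cinner_right[OF \<phi> h] N_sp_cinner_right[OF \<eta> h] c by (simp add: field_simps)
  also have "\<dots> = cinner (S f - cnj l *\<^sub>C f + \<eta>) h"
    by (simp add: cinner_simps closed_symmetric_cinner[OF cs f h])
  finally show ?thesis .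
qed

lemma proj_N_sp_diff_mem_dom:
  assumes cs: "closed_symmetric D S" and l: "Im l \<noteq> 0" and g: "g \<in> orth_compl D"
  shows "proj (N_sp l D S) g - proj (N_sp (cnj l) D S) g \<in> D"
proof -
  define \<phi> where "\<phi> = proj (N_sp l D S) g"
  define \<eta> where "\<eta> = proj (N_sp (cnj l) D S) g"
  have \<phi>: "\<phi> \<in> N_sp l D S" and \<eta>: "\<eta> \<in> N_sp (cnj l) D S"
    using proj_in[OF csubspace_N_sp closed_N_sp] by (simp_all add: \<phi>_def \<eta>_def)
  have "g - \<eta> \<in> M_sp (cnj l) D S"
    using l proj_orthogonal[OF csubspace_N_sp closed_N_sp]
    by (intro orth_N_sp_imp_M_sp[OF cs]) (simp_all add: \<eta>_def)
  then obtain f where f: "f \<in> D" and g_eq: "g = S f - cnj l *\<^sub>C f + \<eta>"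
    by (auto simp: M_sp_def algebra_simps)
  define c where "c = l - cnj l"
  have c: "c \<noteq> 0" using Im_nonzero_imp_cnj_neq[OF l] by (simp add: c_def)
  define e where "e = f - (1 / c) *\<^sub>C (\<phi> - \<eta>)"
  have ce: "c *\<^sub>C e = c *\<^sub>C f - (\<phi> - \<eta>)"
    using c by (simp add: e_def cscale_diff_right)
  have e: "e \<in> N_sp l D S"
    unfolding N_sp_iff
  proof
    fix h assume h: "h \<in> D"
    have "cinner g h = 0"
      using g h cinner_eq_zero_commute unfolding orth_compl_def by blast
    then have "cinner e (S h - l *\<^sub>C h) = 0"
      using cinner_defect_correction[OF cs l f h \<phi> \<eta>] by (simp add: e_def c_def g_eq)
    then show "cinner (S h - l *\<^sub>C h) e = 0" using cinner_eq_zero_commute by blast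
  qed
  \<comment> \<open>\<open>c e\<close> is also orthogonal to \<open>N_\<lambda>\<close>, hence \<open>e = 0\<close>\<close>
  have "g - \<phi> = (S f - l *\<^sub>C f) + c *\<^sub>C e"
    unfolding ce g_eq by (simp add: c_def cscale_diff_left algebra_simps)
  moreover have "cinner (g - \<phi>) e = 0"
    using proj_orthogonal[OF csubspace_N_sp closed_N_sp e] by (simp add: \<phi>_def)
  moreover have "cinner (S f - l *\<^sub>C f) e = 0" using M_sp_orth_N_sp[OF M_sp_I[OF f] e] .
  ultimately have "c * cinner e e = 0" by (simp add: cinner_add_left cinner_scale_left)
  then have "\<phi> - \<eta> = c *\<^sub>C f" using c ce by simp
  then show ?thesis
    using csubspace_scale[OF lin_op_csubspace[OF closed_symmetric_lin_op[OF cs]] f]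
    by (simp add: \<phi>_def \<eta>_def)
qed

lemma forbidden_op_proj:
  assumes cs: "closed_symmetric D S" and l: "Im l \<noteq> 0" and g: "g \<in> orth_compl (closure D)"
  shows "forbidden_op l D S (proj (N_sp l D S) g) = proj (N_sp (cnj l) D S) g"
proof -
  have D: "csubspace D" using lin_op_csubspace[OF closed_symmetric_lin_op[OF cs]] .
  have N: "csubspace (N_sp l' D S)" "closed (N_sp l' D S)" for l'
    by (simp_all add: csubspace_N_sp closed_N_sp)
  have well_defined: "proj (N_sp (cnj l) D S) g' = proj (N_sp (cnj l) D S) g"
    if g': "g' \<in> orth_compl (closure D)" and eq: "proj (N_sp l D S) g' = proj (N_sp l D S) g" for g'
  proof -
    have "g' - g \<in> orth_compl D"
      using g g' csubspace_diff[OF csubspace_orth_compl] by (simp add: orth_compl_closure)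
    from proj_N_sp_diff_mem_dom[OF cs l this]
    have minus: "- proj (N_sp (cnj l) D S) (g' - g) \<in> D" using eq by (simp add: proj_diff[OF N])
    have "proj (N_sp (cnj l) D S) (g' - g) \<in> D"
      using csubspace_scale[OF D minus, of "- 1"] by (simp add: cscale_minus_left)
    then have "proj (N_sp (cnj l) D S) (g' - g) = 0"
      using l proj_in[OF N] by (intro dom_inter_N_sp_eq_zero[OF cs, of "cnj l"]) auto
    then show ?thesis by (simp add: proj_diff[OF N])
  qed
  show ?thesis
    unfolding forbidden_op_def
  proof (rule someI2[where a = "proj (N_sp (cnj l) D S) g"])
    fix y assume "\<exists>g'\<in>orth_compl (closure D).
      proj (N_sp l D S) g = proj (N_sp l D S) g' \<and> y = proj (N_sp (cnj l) D S) g'"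
    then obtain g' where "g' \<in> orth_compl (closure D)" "proj (N_sp l D S) g' = proj (N_sp l D S) g"
      and "y = proj (N_sp (cnj l) D S) g'" by metis
    with well_defined show "y = proj (N_sp (cnj l) D S) g" by metis
  qed (use g in blast)
qed

lemma forbidden_graph_iff:
  assumes cs: "closed_symmetric D S" and l: "Im l \<noteq> 0"
    and \<phi>: "\<phi> \<in> N_sp l D S" and \<eta>: "\<eta> \<in> N_sp (cnj l) D S"
  shows "\<phi> \<in> forbidden_dom l D S \<and> forbidden_op l D S \<phi> = \<eta> \<longleftrightarrow> \<phi> - \<eta> \<in> D"
proof
  assume "\<phi> \<in> forbidden_dom l D S \<and> forbidden_op l D S \<phi> = \<eta>"
  then obtain g where g: "g \<in> orth_compl (closure D)" "\<phi> = proj (N_sp l D S) g"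
    and "forbidden_op l D S \<phi> = \<eta>" by (auto simp: forbidden_dom_def)
  then have "\<eta> = proj (N_sp (cnj l) D S) g" using forbidden_op_proj[OF cs l g(1)] by simp
  then show "\<phi> - \<eta> \<in> D" using proj_N_sp_diff_mem_dom[OF cs l] g by (simp add: orth_compl_closure)
next
  assume dom: "\<phi> - \<eta> \<in> D"
  define f where "f = (1 / (l - cnj l)) *\<^sub>C (\<phi> - \<eta>)"
  have f: "f \<in> D"
    using csubspace_scale[OF lin_op_csubspace[OF closed_symmetric_lin_op[OF cs]] dom]
    by (simp add: f_def)
  define g where "g = S f - cnj l *\<^sub>C f + \<eta>"
  have "cinner h g = 0" if h: "h \<in> D" for h
  proof -
    have "cinner g h = 0"
      using cinner_defect_correction[OF cs l f h \<phi> \<eta>] by (simp add: f_def g_def)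
    then show ?thesis using cinner_eq_zero_commute by blast
  qed
  then have g: "g \<in> orth_compl (closure D)" unfolding orth_compl_closure by (simp add: orth_compl_def)
  have "proj (N_sp l D S) g = \<phi>"
  proof (rule proj_N_sp_eqI[OF \<phi>])
    have "(l - cnj l) *\<^sub>C f = \<phi> - \<eta>"
      using Im_nonzero_imp_cnj_neq[OF l] by (simp add: f_def)
    then have "g - \<phi> = S f - l *\<^sub>C f"
      unfolding g_def by (simp add: cscale_diff_left algebra_simps)
    then show "g - \<phi> \<in> M_sp l D S" by (simp add: M_sp_I[OF f])
  qed
  moreover have "proj (N_sp (cnj l) D S) g = \<eta>"
    by (rule proj_N_sp_eqI[OF \<eta>]) (simp add: g_def M_sp_I[OF f])
  ultimately show "\<phi> \<in> forbidden_dom l D S \<and> forbidden_op l D S \<phi> = \<eta>"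
    using forbidden_op_proj[OF cs l g] g by (auto simp: forbidden_dom_def)
qed

lemma admissible_iff:
  assumes cs: "closed_symmetric D S" and l: "Im l \<noteq> 0"
    and DC: "DC \<subseteq> N_sp l D S" and RC: "C ` DC \<subseteq> N_sp (cnj l) D S"
  shows "admissible l D S DC C \<longleftrightarrow> lin_op DC C \<and> (\<forall>\<psi>\<in>DC. \<psi> - C \<psi> \<in> D \<longrightarrow> \<psi> = 0)"
proof -
  have "\<psi> \<in> forbidden_dom l D S \<and> C \<psi> = forbidden_op l D S \<psi> \<longleftrightarrow> \<psi> - C \<psi> \<in> D" if "\<psi> \<in> DC" for \<psi>
  proof -
    have "\<psi> \<in> N_sp l D S" "C \<psi> \<in> N_sp (cnj l) D S" using DC RC that by auto
    from forbidden_graph_iff[OF cs l this] show ?thesis by metis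
  qed
  then show ?thesis unfolding admissible_def using DC RC by blast
qed

section \<open>The inverse operator\<close>

lemma inv_op_apply: "inj_on S D \<Longrightarrow> f \<in> D \<Longrightarrow> inv_op D S (S f) = f"
  unfolding inv_op_def by (rule the_equality) (auto dest: inj_onD)

lemma lin_op_inv_op:
  assumes L: "lin_op D S" and inj: "inj_on S D"
  shows "lin_op (S ` D) (inv_op D S)"
  unfolding lin_op_def csubspace_def
proof (intro conjI ballI allI)
  have D: "csubspace D" using L by (rule lin_op_csubspace)
  show "0 \<in> S ` D" using csubspace_zero[OF D] lin_op_zero[OF L] by (metis image_eqI)
  fix x a assume "x \<in> S ` D"
  then obtain f where f: "f \<in> D" "x = S f" by blast
  have "a *\<^sub>C x = S (a *\<^sub>C f)" using lin_op_scale[OF L f(1)] f(2) by simp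
  then show "a *\<^sub>C x \<in> S ` D" "inv_op D S (a *\<^sub>C x) = a *\<^sub>C inv_op D S x"
    using csubspace_scale[OF D f(1)] inv_op_apply[OF inj] f by auto
  fix y assume "y \<in> S ` D"
  then obtain h where h: "h \<in> D" "y = S h" by blast
  have "x + y = S (f + h)" using lin_op_add[OF L f(1) h(1)] f(2) h(2) by simp
  then show "x + y \<in> S ` D" "inv_op D S (x + y) = inv_op D S x + inv_op D S y"
    using csubspace_add[OF D f(1) h(1)] inv_op_apply[OF inj] f h by auto
qed

lemma closed_symmetric_inv_op:
  assumes cs: "closed_symmetric D S" and inj: "inj_on S D"
  shows "closed_symmetric (S ` D) (inv_op D S)"
proof -
  have "{(x, inv_op D S x) | x. x \<in> S ` D} = (\<lambda>(a, b). (b, a)) ` {(x, S x) | x. x \<in> D}"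
    using inv_op_apply[OF inj] by auto
  also have "\<dots> = (\<lambda>p. (snd p, fst p)) -` {(x, S x) | x. x \<in> D}" by auto
  finally have graph: "{(x, inv_op D S x) | x. x \<in> S ` D} =
      (\<lambda>p. (snd p, fst p)) -` {(x, S x) | x. x \<in> D}" .
  have "closed {(x, S x) | x. x \<in> D}"
    using cs by (simp add: closed_symmetric_def closed_op_def)
  then have "closed {(x, inv_op D S x) | x. x \<in> S ` D}"
    unfolding graph by (rule continuous_closed_vimage) (intro continuous_intros)
  moreover have "cinner (inv_op D S x) y = cinner x (inv_op D S y)" if "x \<in> S ` D" "y \<in> S ` D" for x y
    using that closed_symmetric_cinner[OF cs] inv_op_apply[OF inj] by auto
  ultimately show ?thesis
    using lin_op_inv_op[OF closed_symmetric_lin_op[OF cs] inj]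
    by (simp add: closed_symmetric_def symmetric_op_def closed_op_def)
qed

lemma csubspace_scale_image:
  assumes M: "csubspace M" and c: "c \<noteq> 0"
  shows "(\<lambda>m. c *\<^sub>C m) ` M = M"
proof
  show "(\<lambda>m. c *\<^sub>C m) ` M \<subseteq> M" using csubspace_scale[OF M] by blast
  show "M \<subseteq> (\<lambda>m. c *\<^sub>C m) ` M"
  proof
    fix m assume "m \<in> M"
    moreover have "m = c *\<^sub>C (inverse c *\<^sub>C m)" using c by simp
    ultimately show "m \<in> (\<lambda>m. c *\<^sub>C m) ` M" using csubspace_scale[OF M] by blast
  qed
qed

text \<open>\<open>(S\<^sup>-\<^sup>1 - \<lambda>\<^sup>-\<^sup>1) S f = - \<lambda>\<^sup>-\<^sup>1 (S - \<lambda>) f\<close>.\<close>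

lemma M_sp_inv_op:
  assumes cs: "closed_symmetric D S" and inj: "inj_on S D" and l: "l \<noteq> 0"
  shows "M_sp (1 / l) (S ` D) (inv_op D S) = M_sp l D S"
proof -
  have "M_sp (1 / l) (S ` D) (inv_op D S) = (\<lambda>m. (- 1 / l) *\<^sub>C m) ` M_sp l D S"
    unfolding M_sp_def image_image
    using inv_op_apply[OF inj] l by (intro image_cong) (simp_all add: cscale_diff_right cscale_minus_left)
  also have "\<dots> = M_sp l D S"
    using csubspace_M_sp[OF closed_symmetric_lin_op[OF cs]] l by (simp add: csubspace_scale_image)
  finally show ?thesis .
qed

lemma N_sp_inv_op:
  "closed_symmetric D S \<Longrightarrow> inj_on S D \<Longrightarrow> l \<noteq> 0 \<Longrightarrow>
    N_sp (1 / l) (S ` D) (inv_op D S) = N_sp l D S"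
  by (simp add: N_sp_def M_sp_inv_op)

section \<open>The extension \<open>B\<close>\<close>

lemma ext_op_apply:
  assumes linT: "lin_op DT T" and DA: "csubspace DA"
    and direct: "\<forall>\<psi>\<in>DT. \<psi> - T \<psi> \<in> DA \<longrightarrow> \<psi> = 0"
    and f: "f \<in> DA" and \<psi>: "\<psi> \<in> DT"
  shows "ext_op z DA A DT T (f + T \<psi> - \<psi>) = A f + z *\<^sub>C T \<psi> - cnj z *\<^sub>C \<psi>"
  unfolding ext_op_def
proof (rule someI2[where a = "A f + z *\<^sub>C T \<psi> - cnj z *\<^sub>C \<psi>"])
  fix y assume "\<exists>f'\<in>DA. \<exists>\<psi>'\<in>DT. f + T \<psi> - \<psi> = f' + T \<psi>' - \<psi>' \<and>
      y = A f' + z *\<^sub>C T \<psi>' - cnj z *\<^sub>C \<psi>'"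
  then obtain f' \<psi>' where f': "f' \<in> DA" and \<psi>': "\<psi>' \<in> DT" and eq: "f + T \<psi> - \<psi> = f' + T \<psi>' - \<psi>'"
    and y: "y = A f' + z *\<^sub>C T \<psi>' - cnj z *\<^sub>C \<psi>'" by blast
  have "(\<psi> - \<psi>') - T (\<psi> - \<psi>') = f - f'"
    unfolding lin_op_diff[OF linT \<psi> \<psi>'] using eq by (simp add: algebra_simps)
  then have "(\<psi> - \<psi>') - T (\<psi> - \<psi>') \<in> DA" using csubspace_diff[OF DA f f'] by simp
  then have "\<psi> - \<psi>' = 0" using direct csubspace_diff[OF lin_op_csubspace[OF linT] \<psi> \<psi>'] by blast
  then have "\<psi> = \<psi>'" by simp
  with eq y show "y = A f + z *\<^sub>C T \<psi> - cnj z *\<^sub>C \<psi>" by simp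
qed (use f \<psi> in blast)

lemma inj_on_ext_op_imp_direct:
  assumes LA: "lin_op DA A" and linT: "lin_op DT T"
    and direct: "\<forall>\<psi>\<in>DT. \<psi> - T \<psi> \<in> DA \<longrightarrow> \<psi> = 0" and z: "cnj z \<noteq> 0"
    and inj: "inj_on (ext_op z DA A DT T) (ext_dom DA DT T)"
    and \<psi>: "\<psi> \<in> DT" and range: "\<psi> - (z / cnj z) *\<^sub>C T \<psi> \<in> A ` DA"
  shows "\<psi> = 0"
proof -
  have DA: "csubspace DA" and DT: "csubspace DT"
    using LA linT by (simp_all add: lin_op_csubspace)
  note B = ext_op_apply[OF linT DA direct]
  obtain f where f: "f \<in> DA" and Af: "A f = \<psi> - (z / cnj z) *\<^sub>C T \<psi>" using range by auto
  have f': "cnj z *\<^sub>C f \<in> DA" using csubspace_scale[OF DA f] .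
  have "ext_op z DA A DT T (cnj z *\<^sub>C f + T \<psi> - \<psi>) = ext_op z DA A DT T (0 + T 0 - 0)"
    using B[OF f' \<psi>] B[OF csubspace_zero[OF DA] csubspace_zero[OF DT]] z
      lin_op_scale[OF LA f] lin_op_zero[OF LA] lin_op_zero[OF linT]
    by (simp add: Af cscale_diff_right)
  moreover have "cnj z *\<^sub>C f + T \<psi> - \<psi> \<in> ext_dom DA DT T" "0 + T 0 - 0 \<in> ext_dom DA DT T"
    using f' \<psi> csubspace_zero[OF DA] csubspace_zero[OF DT] unfolding ext_dom_def by blast+
  ultimately have "cnj z *\<^sub>C f + T \<psi> - \<psi> = 0 + T 0 - 0" by (rule inj_onD[OF inj])
  then have "\<psi> - T \<psi> = cnj z *\<^sub>C f" using lin_op_zero[OF linT] by (simp add: algebra_simps)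
  then show "\<psi> = 0" using direct \<psi> f' by auto
qed

lemma direct_imp_inj_on_ext_op:
  assumes LA: "lin_op DA A" and injA: "inj_on A DA" and linT: "lin_op DT T"
    and direct: "\<forall>\<psi>\<in>DT. \<psi> - T \<psi> \<in> DA \<longrightarrow> \<psi> = 0" and z: "cnj z \<noteq> 0"
    and direct_inv: "\<forall>\<psi>\<in>DT. \<psi> - (z / cnj z) *\<^sub>C T \<psi> \<in> A ` DA \<longrightarrow> \<psi> = 0"
  shows "inj_on (ext_op z DA A DT T) (ext_dom DA DT T)"
proof (rule inj_onI)
  have DA: "csubspace DA" and DT: "csubspace DT"
    using LA linT by (simp_all add: lin_op_csubspace)
  note B = ext_op_apply[OF linT DA direct]
  fix x1 x2 assume "x1 \<in> ext_dom DA DT T" "x2 \<in> ext_dom DA DT T"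
    and eq: "ext_op z DA A DT T x1 = ext_op z DA A DT T x2"
  then obtain f1 \<psi>1 f2 \<psi>2 where f: "f1 \<in> DA" "f2 \<in> DA" and \<psi>: "\<psi>1 \<in> DT" "\<psi>2 \<in> DT"
    and x: "x1 = f1 + T \<psi>1 - \<psi>1" "x2 = f2 + T \<psi>2 - \<psi>2" by (auto simp: ext_dom_def)
  define f \<psi> where "f = f1 - f2" and "\<psi> = \<psi>1 - \<psi>2"
  have fD: "f \<in> DA" and \<psi>D: "\<psi> \<in> DT"
    using csubspace_diff[OF DA f] csubspace_diff[OF DT \<psi>] by (simp_all add: f_def \<psi>_def)
  have "A f + z *\<^sub>C T \<psi> - cnj z *\<^sub>C \<psi> = 0"
    using eq B[OF f(1) \<psi>(1), of z A] B[OF f(2) \<psi>(2), of z A]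
    unfolding x f_def \<psi>_def lin_op_diff[OF LA f] lin_op_diff[OF linT \<psi>]
    by (simp add: cscale_diff_right algebra_simps)
  then have Af: "A f = cnj z *\<^sub>C \<psi> - z *\<^sub>C T \<psi>" by (simp add: algebra_simps)
  then have "\<psi> - (z / cnj z) *\<^sub>C T \<psi> = A ((1 / cnj z) *\<^sub>C f)"
    using lin_op_scale[OF LA fD] z by (simp add: cscale_diff_right)
  then have "\<psi> = 0" using direct_inv \<psi>D csubspace_scale[OF DA fD] by auto
  then have "A f = A 0" using Af lin_op_zero[OF LA] lin_op_zero[OF linT] by simp
  then have "f = 0" using inj_onD[OF injA] fD csubspace_zero[OF DA] by blast
  with \<open>\<psi> = 0\<close> show "x1 = x2"
    using lin_op_diff[OF linT \<psi>] unfolding x f_def \<psi>_def by (simp add: algebra_simps)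
qed

theorem theorem1:
  fixes DA DT :: "'h::chilbert set" and A T :: "'h \<Rightarrow> 'h" and z :: complex
  assumes "closed_symmetric DA A"
    and "inj_on A DA"
    and "Im z \<noteq> 0"
    and "lin_op DT T"
    and "\<forall>\<psi>\<in>DT. norm (T \<psi>) \<le> norm \<psi>"
    and "DT \<subseteq> N_sp z DA A"
    and "T ` DT \<subseteq> N_sp (cnj z) DA A"
    and "admissible z DA A DT T"
  shows "inj_on (ext_op z DA A DT T) (ext_dom DA DT T) \<longleftrightarrow>
         admissible (1 / z) (A ` DA) (inv_op DA A) DT (\<lambda>\<psi>. (z / cnj z) *\<^sub>C T \<psi>)"
proof -
  have z: "z \<noteq> 0" "cnj z \<noteq> 0" "Im (1 / z) \<noteq> 0"
    using assms(3) by (auto simp: Im_divide)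
  have LA: "lin_op DA A" using assms(1) by (rule closed_symmetric_lin_op)
  have direct: "\<forall>\<psi>\<in>DT. \<psi> - T \<psi> \<in> DA \<longrightarrow> \<psi> = 0"
    using admissible_iff[OF assms(1,3,6,7)] assms(8) by blast
  have N_inv: "N_sp (1 / z) (A ` DA) (inv_op DA A) = N_sp z DA A"
    "N_sp (cnj (1 / z)) (A ` DA) (inv_op DA A) = N_sp (cnj z) DA A"
    using N_sp_inv_op[OF assms(1,2) z(1)] N_sp_inv_op[OF assms(1,2) z(2)] by simp_all
  have range: "(\<lambda>\<psi>. (z / cnj z) *\<^sub>C T \<psi>) ` DT \<subseteq> N_sp (cnj z) DA A"
    using assms(7) csubspace_scale[OF csubspace_N_sp] by blast
  have "inj_on (ext_op z DA A DT T) (ext_dom DA DT T) \<longleftrightarrow>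
      (\<forall>\<psi>\<in>DT. \<psi> - (z / cnj z) *\<^sub>C T \<psi> \<in> A ` DA \<longrightarrow> \<psi> = 0)"
    using inj_on_ext_op_imp_direct[OF LA assms(4) direct z(2)]
      direct_imp_inj_on_ext_op[OF LA assms(2,4) direct z(2)] by blast
  also have "\<dots> \<longleftrightarrow> admissible (1 / z) (A ` DA) (inv_op DA A) DT (\<lambda>\<psi>. (z / cnj z) *\<^sub>C T \<psi>)"
    using admissible_iff[OF closed_symmetric_inv_op[OF assms(1,2)] z(3)] N_inv assms(6) range
      lin_op_cscale[OF assms(4)] by simp
  finally show ?thesis .
qed

end
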